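(* Let $n\ge4$ and $\mathcal G\in\mathbb G^n_S$, with orthogonal decomposition $\mathcal G=\mathcal G_{cpi}+\mathcal G_{cyclic}$. Then $\mathcal G_{cpi}$ has edge weights $\omega_j+\omega_k$ where $$\omega_j=\frac1{n-2}\Big[S_S(V_j)-\tfrac12T(\mathcal G)\Big],\qquad j=1,\dots,n,$$ and $T(\mathcal G)=T(\mathcal G_{cpi})=2\sum_{j=1}^n\omega_j$. Moreover, the length in $\mathcal G$ of every Hamiltonian circuit equals $T(\mathcal G)$ plus its length in $\mathcal G_{cyclic}=\mathcal G-\mathcal G_{cpi}$.
   Context: $\mathbb G^n_S$ is the space of complete undirected weighted graphs without loops on $V_1,\dots,V_n$ with edge weights $d_{i,j}=d_{j,i}$, identified with $\mathbb R^{\binom n2}$ with the standard inner product. $\mathbb{CPI}^n_S$ is the subspace of graphs with $d_{j,k}=\omega_j+\omega_k$ for some reals $\omega_j$; $\mathbb C^n_S$ is its orthogonal complement; $\mathcal G_{cpi},\mathcal G_{cyclic}$ are the orthogonal projections of $\mathcal G$ onto these. $S_S(V_j)=\sum_{k\ne j}d_{j,k}$ and $T(\mathcal G)=\frac1{n-1}\sum_{j=1}^nS_S(V_j)$. A Hamiltonian circuit is a closed path visiting every vertex exactly once; its length is the sum of its edge weights. *)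

theory Defs
  imports Complex_Main
begin

(* Vertices V_1..V_n are represented by 0..<n.  A graph in G^n_S is a symmetric
   weight function d :: nat => nat => real which vanishes on the diagonal and
   outside {0..<n} (canonical representative of an element of R^(n choose 2)). *)

definition graphs :: "nat \<Rightarrow> (nat \<Rightarrow> nat \<Rightarrow> real) set" where
  "graphs n = {d. (\<forall>j k. d j k = d k j) \<and>
                  (\<forall>j k. d j k \<noteq> 0 \<longrightarrow> j \<noteq> k \<and> j < n \<and> k < n)}"

definition ginner :: "nat \<Rightarrow> (nat \<Rightarrow> nat \<Rightarrow> real) \<Rightarrow> (nat \<Rightarrow> nat \<Rightarrow> real) \<Rightarrow> real" where
  "ginner n d e = (\<Sum>(j,k)\<in>{(j,k). j < k \<and> k < n}. d j k * e j k)"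

definition CPI :: "nat \<Rightarrow> (nat \<Rightarrow> nat \<Rightarrow> real) set" where
  "CPI n = {d \<in> graphs n. \<exists>\<omega>::nat \<Rightarrow> real.
              \<forall>j k. j < n \<longrightarrow> k < n \<longrightarrow> j \<noteq> k \<longrightarrow> d j k = \<omega> j + \<omega> k}"

definition cpi_part :: "nat \<Rightarrow> (nat \<Rightarrow> nat \<Rightarrow> real) \<Rightarrow> (nat \<Rightarrow> nat \<Rightarrow> real)" where
  "cpi_part n d = (THE c. c \<in> CPI n \<and> (\<forall>e \<in> CPI n. ginner n (d - c) e = 0))"

definition cyclic_part :: "nat \<Rightarrow> (nat \<Rightarrow> nat \<Rightarrow> real) \<Rightarrow> (nat \<Rightarrow> nat \<Rightarrow> real)" where
  "cyclic_part n d = d - cpi_part n d"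

definition S_S :: "nat \<Rightarrow> (nat \<Rightarrow> nat \<Rightarrow> real) \<Rightarrow> nat \<Rightarrow> real" where
  "S_S n d j = (\<Sum>k\<in>{0..<n} - {j}. d j k)"

definition T_G :: "nat \<Rightarrow> (nat \<Rightarrow> nat \<Rightarrow> real) \<Rightarrow> real" where
  "T_G n d = (1 / (real n - 1)) * (\<Sum>j<n. S_S n d j)"

(* a Hamiltonian circuit on V_1..V_n, given by the cyclic order of its vertices *)
definition ham_circuit :: "nat \<Rightarrow> nat list \<Rightarrow> bool" where
  "ham_circuit n p \<longleftrightarrow> distinct p \<and> set p = {0..<n}"

definition circuit_length :: "nat \<Rightarrow> (nat \<Rightarrow> nat \<Rightarrow> real) \<Rightarrow> nat list \<Rightarrow> real" where
  "circuit_length n d p = (\<Sum>i<n. d (p ! i) (p ! ((i + 1) mod n)))"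

end

theory Submission
  imports Defs
begin

text \<open>The projection onto \<open>CPI\<close> is the unique graph of the form \<open>\<omega>\<^sub>j + \<omega>\<^sub>k\<close> whose vertex sums
  agree with those of \<open>\<G>\<close>: a graph with vanishing vertex sums is orthogonal to every \<open>\<omega>\<^sub>j + \<omega>\<^sub>k\<close>,
  since the inner product regroups into \<open>\<Sum>\<^sub>j \<omega>\<^sub>j S(V\<^sub>j)\<close>. Matching vertex sums gives
  \<open>S(V\<^sub>j) = (n-2)\<omega>\<^sub>j + \<Sum>\<omega>\<close>, which is solved by the stated \<open>\<omega>\<close>. A Hamiltonian circuit
  enters and leaves every vertex once, so its length in the \<open>CPI\<close> part is \<open>2\<Sum>\<omega> = T(\<G>)\<close>.\<close>

definition cpi_graph :: "nat \<Rightarrow> (nat \<Rightarrow> real) \<Rightarrow> nat \<Rightarrow> nat \<Rightarrow> real" where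
  "cpi_graph n \<omega> = (\<lambda>j k. if j < n \<and> k < n \<and> j \<noteq> k then \<omega> j + \<omega> k else 0)"

lemma finite_upper_pairs: "finite {(j, k). j < k \<and> k < (n::nat)}"
  by (rule finite_subset[of _ "{..<n} \<times> {..<n}"]) auto

lemma sum_upper_pairs_eq_half:
  fixes f :: "nat \<Rightarrow> nat \<Rightarrow> real"
  assumes sym: "\<And>j k. f j k = f k j" and diag: "\<And>j. f j j = 0"
  shows "(\<Sum>(j, k)\<in>{(j, k). j < k \<and> k < n}. f j k) = (\<Sum>j<n. \<Sum>k<n. f j k) / 2"
proof (induction n)
  case 0
  then show ?case by simp
next
  case (Suc n)
  have split: "{(j, k). j < k \<and> k < Suc n} = {(j, k). j < k \<and> k < n} \<union> (\<lambda>j. (j, n)) ` {..<n}"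
    by auto
  have "(\<Sum>(j, k)\<in>{(j, k). j < k \<and> k < Suc n}. f j k)
      = (\<Sum>(j, k)\<in>{(j, k). j < k \<and> k < n}. f j k) + (\<Sum>j<n. f j n)"
    unfolding split
    by (subst sum.union_disjoint) (auto simp: finite_upper_pairs sum.reindex inj_on_def)
  moreover have "(\<Sum>j<Suc n. \<Sum>k<Suc n. f j k) = (\<Sum>j<n. \<Sum>k<n. f j k) + 2 * (\<Sum>j<n. f j n)"
    using diag by (simp add: sum.distrib sym[of n])
  ultimately show ?case using Suc.IH by simp
qed

lemma ginner_diff_left: "ginner n (a - b) e = ginner n a e - ginner n b e"
  unfolding ginner_def by (simp add: sum_subtractf[symmetric] case_prod_beta algebra_simps)

lemma graphs_diff: "a \<in> graphs n \<Longrightarrow> b \<in> graphs n \<Longrightarrow> a - b \<in> graphs n"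
  unfolding graphs_def by (auto simp: fun_diff_def) (metis diff_self)+

lemma CPI_diff: "a \<in> CPI n \<Longrightarrow> b \<in> CPI n \<Longrightarrow> a - b \<in> CPI n"
proof -
  assume "a \<in> CPI n" "b \<in> CPI n"
  then obtain \<alpha> \<beta> where "\<forall>j k. j < n \<longrightarrow> k < n \<longrightarrow> j \<noteq> k \<longrightarrow> a j k = \<alpha> j + \<alpha> k"
    and "\<forall>j k. j < n \<longrightarrow> k < n \<longrightarrow> j \<noteq> k \<longrightarrow> b j k = \<beta> j + \<beta> k"
    and "a \<in> graphs n" "b \<in> graphs n" unfolding CPI_def by blast
  then show "a - b \<in> CPI n"
    unfolding CPI_def by (auto intro!: graphs_diff exI[of _ "\<alpha> - \<beta>"])
qed

lemma graphs_ginner_self_eq_0: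
  assumes "x \<in> graphs n" and "ginner n x x = 0"
  shows "x = (\<lambda>_ _. 0)"
proof -
  have "(\<Sum>(j, k)\<in>{(j, k). j < k \<and> k < n}. (x j k)\<^sup>2) = 0"
    using assms(2) unfolding ginner_def by (simp add: power2_eq_square)
  then have upper: "x j k = 0" if "j < k" "k < n" for j k
    using that sum_nonneg_eq_0_iff[OF finite_upper_pairs[of n], of "\<lambda>(j, k). (x j k)\<^sup>2"] by auto
  show ?thesis
  proof (rule ext, rule ext)
    fix j k
    show "x j k = 0"
      using upper[of j k] upper[of k j] assms(1) unfolding graphs_def
      by (cases j k rule: linorder_cases) auto
  qed
qed

lemma cpi_part_eqI:
  assumes "c \<in> CPI n" and orth: "\<forall>e\<in>CPI n. ginner n (d - c) e = 0"
  shows "cpi_part n d = c"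
  unfolding cpi_part_def
proof (rule the_equality)
  show "c \<in> CPI n \<and> (\<forall>e\<in>CPI n. ginner n (d - c) e = 0)" using assms by blast
next
  fix c' assume c': "c' \<in> CPI n \<and> (\<forall>e\<in>CPI n. ginner n (d - c') e = 0)"
  have diff: "c' - c \<in> CPI n" using CPI_diff c' assms(1) by blast
  have "ginner n (c' - c) (c' - c) = ginner n (d - c) (c' - c) - ginner n (d - c') (c' - c)"
    by (simp add: ginner_diff_left)
  also have "\<dots> = 0" using orth c' diff by simp
  finally have "c' - c = (\<lambda>_ _. 0)"
    using diff graphs_ginner_self_eq_0 unfolding CPI_def by blast
  then show "c' = c" by (auto simp: fun_eq_iff)
qed

lemma ginner_eq_0_if_vertex_sums_0:
  assumes "x \<in> graphs n" and rows: "\<And>j. j < n \<Longrightarrow> S_S n x j = 0" and "e \<in> CPI n"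
  shows "ginner n x e = 0"
proof -
  obtain \<alpha> where \<alpha>: "\<forall>j k. j < n \<longrightarrow> k < n \<longrightarrow> j \<noteq> k \<longrightarrow> e j k = \<alpha> j + \<alpha> k"
    and "e \<in> graphs n" using assms(3) unfolding CPI_def by blast
  then have e_sym: "\<And>j k. e j k = e k j" unfolding graphs_def by blast
  have x_sym: "\<And>j k. x j k = x k j" and x_diag: "\<And>j. x j j = 0"
    using assms(1) unfolding graphs_def by blast+
  have row_sum: "(\<Sum>k<n. x j k) = 0" if "j < n" for j
    using rows[OF that] that x_diag
    by (simp add: S_S_def lessThan_atLeast0 sum_diff1)
  have "ginner n x e = (\<Sum>j<n. \<Sum>k<n. x j k * e j k) / 2"
    unfolding ginner_def by (rule sum_upper_pairs_eq_half) (auto simp: x_sym e_sym x_diag)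
  also have "(\<Sum>j<n. \<Sum>k<n. x j k * e j k) = (\<Sum>j<n. \<Sum>k<n. x j k * \<alpha> j + x j k * \<alpha> k)"
  proof (intro sum.cong refl)
    fix j k assume "j \<in> {..<n}" "k \<in> {..<n}"
    then show "x j k * e j k = x j k * \<alpha> j + x j k * \<alpha> k"
      by (cases "j = k") (auto simp: \<alpha> x_diag distrib_left)
  qed
  also have "\<dots> = (\<Sum>j<n. \<alpha> j * (\<Sum>k<n. x j k)) + (\<Sum>j<n. \<Sum>k<n. x j k * \<alpha> k)"
    by (simp add: sum.distrib sum_distrib_left mult.commute)
  also have "(\<Sum>j<n. \<Sum>k<n. x j k * \<alpha> k) = (\<Sum>k<n. \<alpha> k * (\<Sum>j<n. x k j))"
    by (subst sum.swap) (simp add: sum_distrib_left x_sym mult.commute)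
  finally show ?thesis using row_sum by simp
qed

lemma cpi_graph_in_CPI: "cpi_graph n \<omega> \<in> CPI n"
  unfolding CPI_def graphs_def cpi_graph_def by auto

lemma S_S_cpi_graph:
  assumes "j < n"
  shows "S_S n (cpi_graph n \<omega>) j = (real n - 2) * \<omega> j + (\<Sum>k<n. \<omega> k)"
proof -
  have "S_S n (cpi_graph n \<omega>) j = (\<Sum>k\<in>{0..<n} - {j}. \<omega> j + \<omega> k)"
    unfolding S_S_def cpi_graph_def using assms by (intro sum.cong) auto
  also have "\<dots> = (real n - 1) * \<omega> j + ((\<Sum>k<n. \<omega> k) - \<omega> j)"
    using assms by (simp add: sum.distrib sum_diff1 lessThan_atLeast0 of_nat_diff)
  finally show ?thesis by (simp add: algebra_simps)
qed

lemma T_G_cpi_graph: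
  assumes "n \<ge> 2"
  shows "T_G n (cpi_graph n \<omega>) = 2 * (\<Sum>j<n. \<omega> j)"
proof -
  have "(\<Sum>j<n. S_S n (cpi_graph n \<omega>) j) = (real n - 2) * (\<Sum>j<n. \<omega> j) + real n * (\<Sum>j<n. \<omega> j)"
    by (simp add: S_S_cpi_graph sum.distrib sum_distrib_left)
  also have "\<dots> = (real n - 1) * (2 * (\<Sum>j<n. \<omega> j))"
    by (simp add: algebra_simps)
  finally show ?thesis
    using assms unfolding T_G_def by simp
qed

lemma sum_S_S_eq: "n \<ge> 2 \<Longrightarrow> (\<Sum>j<n. S_S n d j) = (real n - 1) * T_G n d"
  unfolding T_G_def by simp

lemma cpi_part_eq_cpi_graph:
  assumes "n \<ge> 3" and d: "d \<in> graphs n"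
    and \<omega>_def: "\<omega> = (\<lambda>j. (1 / (real n - 2)) * (S_S n d j - T_G n d / 2))"
  shows "cpi_part n d = cpi_graph n \<omega>" and "(\<Sum>j<n. \<omega> j) = T_G n d / 2"
proof -
  have n2: "real n - 2 > 0" using assms(1) by simp
  have "(\<Sum>j<n. \<omega> j) = ((\<Sum>j<n. S_S n d j) - real n * (T_G n d / 2)) / (real n - 2)"
    unfolding \<omega>_def by (simp add: sum_divide_distrib[symmetric] sum_subtractf)
  also have "\<dots> = T_G n d / 2"
    using n2 assms(1) by (simp add: sum_S_S_eq field_simps)
  finally show sum_\<omega>: "(\<Sum>j<n. \<omega> j) = T_G n d / 2" .
  have same_sums: "S_S n (cpi_graph n \<omega>) j = S_S n d j" if "j < n" for j
    using n2 unfolding S_S_cpi_graph[OF that] sum_\<omega> by (simp add: \<omega>_def)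
  have zero_sums: "S_S n (d - cpi_graph n \<omega>) j = 0" if "j < n" for j
    using same_sums[OF that] by (simp add: S_S_def sum_subtractf)
  have "d - cpi_graph n \<omega> \<in> graphs n"
    using d cpi_graph_in_CPI graphs_diff unfolding CPI_def by blast
  then show "cpi_part n d = cpi_graph n \<omega>"
    using cpi_part_eqI[OF cpi_graph_in_CPI] ginner_eq_0_if_vertex_sums_0 zero_sums by blast
qed

lemma sum_lessThan_rotate:
  fixes g :: "nat \<Rightarrow> 'a::comm_monoid_add"
  shows "(\<Sum>i<n. g ((i + 1) mod n)) = (\<Sum>i<n. g i)"
proof (cases n)
  case (Suc m)
  have "(\<Sum>i<Suc m. g ((i + 1) mod Suc m)) = (\<Sum>i<m. g ((i + 1) mod Suc m)) + g 0"
    by simp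
  also have "(\<Sum>i<m. g ((i + 1) mod Suc m)) = (\<Sum>i<m. g (Suc i))"
    by (intro sum.cong) auto
  also have "\<dots> + g 0 = (\<Sum>i<Suc m. g i)"
    unfolding sum.lessThan_Suc_shift by (simp add: add.commute)
  finally show ?thesis using Suc by simp
qed simp

lemma circuit_length_diff:
  "circuit_length n (a - b) p = circuit_length n a p - circuit_length n b p"
  unfolding circuit_length_def by (simp add: sum_subtractf)

lemma circuit_length_cpi_graph:
  assumes "n \<ge> 2" and "ham_circuit n p"
  shows "circuit_length n (cpi_graph n \<omega>) p = 2 * (\<Sum>j<n. \<omega> j)"
proof -
  have dist: "distinct p" and set_p: "set p = {0..<n}" using assms(2) unfolding ham_circuit_def by auto
  then have len: "length p = n" using distinct_card by fastforce
  have edge: "cpi_graph n \<omega> (p ! i) (p ! ((i + 1) mod n)) = \<omega> (p ! i) + \<omega> (p ! ((i + 1) mod n))"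
    if "i < n" for i
  proof -
    have "i \<noteq> (i + 1) mod n"
    proof (cases "i + 1 < n")
      case False
      then have "i + 1 = n" using that by simp
      then show ?thesis using assms(1) by auto
    qed simp
    then have "p ! i \<noteq> p ! ((i + 1) mod n)"
      using nth_eq_iff_index_eq[OF dist] that len by simp
    moreover have "p ! i < n" "p ! ((i + 1) mod n) < n"
      using nth_mem[of i p] nth_mem[of "(i + 1) mod n" p] set_p that len assms(1) by auto
    ultimately show ?thesis unfolding cpi_graph_def by simp
  qed
  have bij: "bij_betw ((!) p) {..<n} {..<n}"
    by (rule bij_betw_nth[OF dist]) (auto simp: len set_p lessThan_atLeast0)
  have "circuit_length n (cpi_graph n \<omega>) p = (\<Sum>i<n. \<omega> (p ! i)) + (\<Sum>i<n. \<omega> (p ! ((i + 1) mod n)))"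
    unfolding circuit_length_def sum.distrib[symmetric] by (intro sum.cong refl edge) simp
  also have "\<dots> = 2 * (\<Sum>i<n. \<omega> (p ! i))"
    using sum_lessThan_rotate[of "\<lambda>i. \<omega> (p ! i)"] by simp
  also have "(\<Sum>i<n. \<omega> (p ! i)) = (\<Sum>j<n. \<omega> j)"
    using sum.reindex_bij_betw[OF bij] by simp
  finally show ?thesis .
qed

theorem theorem12:
  fixes n :: nat and d :: "nat \<Rightarrow> nat \<Rightarrow> real"
  assumes "n \<ge> 4" and "d \<in> graphs n"
  defines "\<omega> \<equiv> \<lambda>j. (1 / (real n - 2)) * (S_S n d j - T_G n d / 2)"
  shows "(\<forall>j k. j < n \<longrightarrow> k < n \<longrightarrow> j \<noteq> k \<longrightarrow> cpi_part n d j k = \<omega> j + \<omega> k)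
         \<and> T_G n d = T_G n (cpi_part n d)
         \<and> T_G n (cpi_part n d) = 2 * (\<Sum>j<n. \<omega> j)
         \<and> (\<forall>p. ham_circuit n p \<longrightarrow>
               circuit_length n d p = T_G n d + circuit_length n (cyclic_part n d) p)"
proof -
  have n3: "n \<ge> 3" using assms(1) by simp
  note cpi = cpi_part_eq_cpi_graph[OF n3 assms(2) \<omega>_def[THEN meta_eq_to_obj_eq]]
  have T_cpi: "T_G n (cpi_part n d) = 2 * (\<Sum>j<n. \<omega> j)"
    using T_G_cpi_graph n3 cpi(1) by simp
  have "circuit_length n d p = T_G n d + circuit_length n (cyclic_part n d) p"
    if "ham_circuit n p" for p
    using circuit_length_cpi_graph[OF _ that, of \<omega>] n3 cpi
    unfolding cyclic_part_def circuit_length_diff by simp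
  then show ?thesis
    using T_cpi cpi unfolding cpi_graph_def by simp
qed

end
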